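(* Let $(\tau_1,\tau_2)$ have a bivariate wide-sense geometric law with $\mathbb{P}(\tau_1>1)>0$ and $\mathbb{P}(\tau_2>1)>0$. Then the law of $(\tau_1,\tau_2)$ is a bivariate narrow-sense geometric law if and only if $\mathrm{Corr}[\tau_1,\tau_2]\ge0$. Explicitly, if $\mathrm{Corr}[\tau_1,\tau_2]\ge 0$ and $\tilde p_\emptyset>0$, then $(\tau_1,\tau_2)\sim\mathcal{G}^{\mathcal N}(p_{\{1\}},p_{\{2\}},p_{\{1,2\}})$ with $$p_{\{1\}}=\frac{\tilde p_\emptyset}{\tilde p_\emptyset+\tilde p_{\{1\}}},\quad p_{\{2\}}=\frac{\tilde p_\emptyset}{\tilde p_\emptyset+\tilde p_{\{2\}}},\quad p_{\{1,2\}}=\frac{(\tilde p_\emptyset+\tilde p_{\{1\}})(\tilde p_\emptyset+\tilde p_{\{2\}})}{\tilde p_\emptyset}.$$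
   Context: Narrow-sense law $\mathcal{G}^{\mathcal N}(\mathbf p)$ in dimension $2$: for $p_{\{1\}},p_{\{2\}},p_{\{1,2\}}\in[0,1]$ with $p_{\{1\}}p_{\{1,2\}}<1$, $p_{\{2\}}p_{\{1,2\}}<1$, take independent $E_I$ with $\mathbb{P}(E_I>n)=p_I^n$ and $\tau_1=\min(E_{\{1\}},E_{\{1,2\}})$, $\tau_2=\min(E_{\{2\}},E_{\{1,2\}})$. Wide-sense law in dimension 2: for $\tilde p_I\in[0,1]$, $I\subseteq\{1,2\}$, summing to $1$ with $\sum_{I\not\ni k}\tilde p_I<1$ ($k=1,2$), run i.i.d. trials with outcome $I$ of probability $\tilde p_I$, let $\tilde E_I$ be the first trial with outcome $I$, and $\tau_k=\min\{\tilde E_I:k\in I\}$; then $\mathbb{P}(\tau_1>i,\tau_2>j)=(\tilde p_\emptyset+\tilde p_{\{2\}})^{i-j}\tilde p_\emptyset^j$ for $i\ge j$ and $(\tilde p_\emptyset+\tilde p_{\{1\}})^{j-i}\tilde p_\emptyset^i$ for $i<j$. *)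

theory Defs
  imports "HOL-Probability.Probability"
begin

text \<open>Laws of random vectors (tau1, tau2) with values in {1,2,...}^2 are represented as
  pmfs on nat \<times> nat.  A law on nat \<times> nat is determined by its joint survival function
  (i, j) \<mapsto> P(tau1 > i, tau2 > j), i, j \<in> nat.\<close>

definition surv :: "(nat \<times> nat) pmf \<Rightarrow> nat \<Rightarrow> nat \<Rightarrow> real" where
  "surv M i j = measure_pmf.prob M {(a, b). a > i \<and> b > j}"

text \<open>Narrow-sense law G^N(p1, p2, p12): tau1 = min(E1, E12), tau2 = min(E2, E12) with
  independent E_I, P(E_I > n) = p_I^n; hence P(tau1 > i, tau2 > j) = p1^i p2^j p12^(max i j).\<close>

definition narrow_law :: "(nat \<times> nat) pmf \<Rightarrow> real \<Rightarrow> real \<Rightarrow> real \<Rightarrow> bool" where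
  "narrow_law M p1 p2 p12 \<longleftrightarrow>
     0 \<le> p1 \<and> p1 \<le> 1 \<and> 0 \<le> p2 \<and> p2 \<le> 1 \<and> 0 \<le> p12 \<and> p12 \<le> 1 \<and>
     p1 * p12 < 1 \<and> p2 * p12 < 1 \<and>
     (\<forall>i j. surv M i j = p1 ^ i * p2 ^ j * p12 ^ (max i j))"

definition is_narrow :: "(nat \<times> nat) pmf \<Rightarrow> bool" where
  "is_narrow M \<longleftrightarrow> (\<exists>p1 p2 p12. narrow_law M p1 p2 p12)"

text \<open>Wide-sense law with parameters q0 = p~_{}, q1 = p~_{1}, q2 = p~_{2}, q12 = p~_{1,2}.\<close>

definition wide_law :: "(nat \<times> nat) pmf \<Rightarrow> real \<Rightarrow> real \<Rightarrow> real \<Rightarrow> real \<Rightarrow> bool" where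
  "wide_law M q0 q1 q2 q12 \<longleftrightarrow>
     0 \<le> q0 \<and> q0 \<le> 1 \<and> 0 \<le> q1 \<and> q1 \<le> 1 \<and> 0 \<le> q2 \<and> q2 \<le> 1 \<and>
     0 \<le> q12 \<and> q12 \<le> 1 \<and> q0 + q1 + q2 + q12 = 1 \<and>
     q0 + q2 < 1 \<and> q0 + q1 < 1 \<and>
     (\<forall>i j. surv M i j =
        (if j \<le> i then (q0 + q2) ^ (i - j) * q0 ^ j else (q0 + q1) ^ (j - i) * q0 ^ i))"

definition cov :: "(nat \<times> nat) pmf \<Rightarrow> real" where
  "cov M = measure_pmf.expectation M (\<lambda>(a, b). real a * real b)
           - measure_pmf.expectation M (\<lambda>(a, b). real a) * measure_pmf.expectation M (\<lambda>(a, b). real b)"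

definition var1 :: "(nat \<times> nat) pmf \<Rightarrow> real" where
  "var1 M = measure_pmf.variance M (\<lambda>(a, b). real a)"

definition var2 :: "(nat \<times> nat) pmf \<Rightarrow> real" where
  "var2 M = measure_pmf.variance M (\<lambda>(a, b). real b)"

definition corr :: "(nat \<times> nat) pmf \<Rightarrow> real" where
  "corr M = cov M / sqrt (var1 M * var2 M)"

end

theory Submission
  imports Defs
begin

text \<open>Both marginals of a wide-sense law are geometric, P(tau1 > i) = (q0 + q2)^i and
  P(tau2 > j) = (q0 + q1)^j, so means and variances are explicit. For the mixed moment,
  E[tau1 tau2] is the sum of all joint survival probabilities P(tau1 > i, tau2 > j); splitting
  the index pairs along the diagonal turns it into a double geometric series. The outcome is
  Cov = (q0 - (q0 + q2)(q0 + q1)) / ((1 - q0)(1 - q0 - q2)(1 - q0 - q1)), so the correlation is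
  nonnegative iff (q0 + q2)(q0 + q1) \<le> q0. Comparing the survival functions at (1,0), (0,1),
  (1,1) shows that a narrow-sense law satisfies exactly this inequality, and
  conversely the stated parameters reproduce the wide-sense survival function.\<close>

lemma ennreal_of_nat_eq_suminf_indicator:
  "ennreal (real n) = (\<Sum>i. of_bool (i < n))"
proof -
  have "(\<Sum>i. (of_bool (i < n) :: ennreal)) = (\<Sum>i<n. of_bool (i < n))"
    by (rule suminf_finite) auto
  then show ?thesis by (simp add: ennreal_of_nat_eq_real_of_nat)
qed

lemma sum_lessThan_odd: "(\<Sum>i<n. 2 * real i + 1) = real n ^ 2"
  by (induction n) (auto simp: power2_eq_square algebra_simps)

lemma ennreal_square_eq_suminf_indicator:
  "ennreal (real n ^ 2) = (\<Sum>i. ennreal (2 * real i + 1) * of_bool (i < n))"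
proof -
  have "(\<Sum>i. ennreal (2 * real i + 1) * of_bool (i < n))
      = (\<Sum>i<n. ennreal (2 * real i + 1) * of_bool (i < n))"
    by (rule suminf_finite) auto
  also have "\<dots> = ennreal (\<Sum>i<n. 2 * real i + 1)"
    by (subst sum_ennreal[symmetric]) (auto intro!: sum.cong)
  finally show ?thesis by (simp add: sum_lessThan_odd)
qed

lemma nn_integral_nat_eq_suminf_tail:
  fixes M :: "'a pmf" and X :: "'a \<Rightarrow> nat"
  shows "(\<integral>\<^sup>+x. ennreal (real (X x)) \<partial>M) = (\<Sum>i. emeasure M {x. i < X x})"
proof -
  have "(\<integral>\<^sup>+x. ennreal (real (X x)) \<partial>M) = (\<integral>\<^sup>+x. (\<Sum>i. indicator {x. i < X x} x) \<partial>M)"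
    by (simp add: ennreal_of_nat_eq_suminf_indicator indicator_def)
  then show ?thesis by (simp add: nn_integral_suminf)
qed

lemma nn_integral_nat_square_eq_suminf_tail:
  fixes M :: "'a pmf" and X :: "'a \<Rightarrow> nat"
  shows "(\<integral>\<^sup>+x. ennreal (real (X x) ^ 2) \<partial>M)
       = (\<Sum>i. ennreal (2 * real i + 1) * emeasure M {x. i < X x})"
proof -
  have "(\<integral>\<^sup>+x. ennreal (real (X x) ^ 2) \<partial>M)
      = (\<integral>\<^sup>+x. (\<Sum>i. ennreal (2 * real i + 1) * indicator {x. i < X x} x) \<partial>M)"
    by (simp only: ennreal_square_eq_suminf_indicator indicator_def mem_Collect_eq)
  then show ?thesis by (simp add: nn_integral_suminf nn_integral_cmult)
qed

lemma
  fixes M :: "'a pmf" and X :: "'a \<Rightarrow> nat" and r :: real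
  assumes tail: "\<And>i. measure_pmf.prob M {x. i < X x} = r ^ i" and r: "0 \<le> r" "r < 1"
  shows integrable_geometric_tail: "integrable M (\<lambda>x. real (X x))"
    and expectation_geometric_tail: "measure_pmf.expectation M (\<lambda>x. real (X x)) = 1 / (1 - r)"
    and integrable_square_geometric_tail: "integrable M (\<lambda>x. real (X x) ^ 2)"
    and expectation_square_geometric_tail:
      "measure_pmf.expectation M (\<lambda>x. real (X x) ^ 2) = (1 + r) / (1 - r)^2"
proof -
  have "(\<integral>\<^sup>+x. ennreal (real (X x)) \<partial>M) = (\<Sum>i. ennreal (r ^ i))"
    by (simp add: nn_integral_nat_eq_suminf_tail measure_pmf.emeasure_eq_measure tail)
  also have "\<dots> = ennreal (1 / (1 - r))"
    using r by (intro suminf_ennreal_eq geometric_sums) auto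
  finally show "integrable M (\<lambda>x. real (X x))"
    and "measure_pmf.expectation M (\<lambda>x. real (X x)) = 1 / (1 - r)"
    using r by (subst (asm) nn_integral_eq_integrable; simp)+
  have "(\<lambda>i. 2 * (real (Suc i) * r ^ i) - r ^ i) sums (2 * (1 / (1 - r)^2) - 1 / (1 - r))"
    using r by (intro sums_diff sums_mult geometric_deriv_sums geometric_sums) auto
  moreover have "2 * (1 / (1 - r)^2) - 1 / (1 - r) = (1 + r) / (1 - r)^2"
    using r by (simp add: divide_simps) (simp add: algebra_simps power2_eq_square)
  ultimately have "(\<lambda>i. (2 * real i + 1) * r ^ i) sums ((1 + r) / (1 - r)^2)"
    by (simp add: algebra_simps)
  then have "(\<Sum>i. ennreal ((2 * real i + 1) * r ^ i)) = ennreal ((1 + r) / (1 - r)^2)"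
    using r by (intro suminf_ennreal_eq) auto
  moreover have "(\<integral>\<^sup>+x. ennreal (real (X x) ^ 2) \<partial>M) = (\<Sum>i. ennreal ((2 * real i + 1) * r ^ i))"
    using r by (simp only: nn_integral_nat_square_eq_suminf_tail measure_pmf.emeasure_eq_measure
        tail ennreal_mult' ennreal_mult'')
  ultimately have "(\<integral>\<^sup>+x. ennreal (real (X x) ^ 2) \<partial>M) = ennreal ((1 + r) / (1 - r)^2)"
    by simp
  then show "integrable M (\<lambda>x. real (X x) ^ 2)"
    and "measure_pmf.expectation M (\<lambda>x. real (X x) ^ 2) = (1 + r) / (1 - r)^2"
    using r by (subst (asm) nn_integral_eq_integrable; simp)+
qed

lemma variance_geometric_tail:
  fixes M :: "'a pmf" and X :: "'a \<Rightarrow> nat" and r :: real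
  assumes "\<And>i. measure_pmf.prob M {x. i < X x} = r ^ i" "0 \<le> r" "r < 1"
  shows "measure_pmf.variance M (\<lambda>x. real (X x)) = r / (1 - r)^2"
proof -
  have "measure_pmf.variance M (\<lambda>x. real (X x)) = (1 + r) / (1 - r)^2 - (1 / (1 - r))^2"
    using measure_pmf.variance_eq[OF integrable_geometric_tail[OF assms]
        integrable_square_geometric_tail[OF assms]]
      assms by (simp add: expectation_geometric_tail expectation_square_geometric_tail)
  also have "\<dots> = r / (1 - r)^2"
    using assms(3) by (simp add: divide_simps)
  finally show ?thesis .
qed

lemma suminf_diagonal_row_count:
  "(\<Sum>k. of_bool (m < a \<and> m + k < b) + of_bool (m + k + 1 < a \<and> m < b) :: ennreal)
   = ennreal (if m < a \<and> m < b then real (b - m) + real (a - m - 1) else 0)"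
proof -
  have "(\<Sum>k. of_bool (m < a \<and> m + k < b) + of_bool (m + k + 1 < a \<and> m < b) :: ennreal)
      = (\<Sum>k<a + b. of_bool (m < a \<and> m + k < b) + of_bool (m + k + 1 < a \<and> m < b))"
    by (rule suminf_finite) auto
  also have "\<dots> = of_nat (card ({..<a + b} \<inter> {k. m < a \<and> m + k < b}))
                 + of_nat (card ({..<a + b} \<inter> {k. m + k + 1 < a \<and> m < b}))"
    by (simp add: sum.distrib)
  also have "\<dots> = ennreal (if m < a \<and> m < b then real (b - m) + real (a - m - 1) else 0)"
  proof (cases "m < a \<and> m < b")
    case True
    then have "{..<a + b} \<inter> {k. m < a \<and> m + k < b} = {..<b - m}"
      and "{..<a + b} \<inter> {k. m + k + 1 < a \<and> m < b} = {..<a - m - 1}"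
      by auto
    with True show ?thesis
      by (simp add: ennreal_of_nat_eq_real_of_nat ennreal_plus[symmetric])
  next
    case False
    then have "{..<a + b} \<inter> {k. m < a \<and> m + k < b} = {}"
      and "{..<a + b} \<inter> {k. m + k + 1 < a \<and> m < b} = {}"
      by auto
    with False show ?thesis by simp
  qed
  finally show ?thesis .
qed

lemma sum_diagonal_row_counts:
  "c \<le> a \<Longrightarrow> c \<le> b \<Longrightarrow>
    (\<Sum>m<c. real (b - m) + real (a - m - 1)) = real c * (real a + real b - real c)"
  by (induction c) (auto simp: of_nat_diff algebra_simps)

text \<open>The a b pairs (i, j) with i < a, j < b are enumerated as (m, m + k) and (m + k + 1, m).\<close>

lemma ennreal_mult_eq_diagonal_suminf:
  "ennreal (real a * real b)
   = (\<Sum>m. \<Sum>k. of_bool (m < a \<and> m + k < b) + of_bool (m + k + 1 < a \<and> m < b))"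
proof -
  have "(\<Sum>m. \<Sum>k. of_bool (m < a \<and> m + k < b) + of_bool (m + k + 1 < a \<and> m < b))
      = (\<Sum>m. ennreal (if m < a \<and> m < b then real (b - m) + real (a - m - 1) else 0))"
    by (simp only: suminf_diagonal_row_count)
  also have "\<dots> = (\<Sum>m<min a b. ennreal (if m < a \<and> m < b then real (b - m) + real (a - m - 1) else 0))"
    by (rule suminf_finite) auto
  also have "\<dots> = ennreal (\<Sum>m<min a b. real (b - m) + real (a - m - 1))"
    by (subst sum_ennreal[symmetric]) (auto intro!: sum.cong)
  also have "\<dots> = ennreal (real a * real b)"
    by (subst sum_diagonal_row_counts) (auto simp: min_def algebra_simps)
  finally show ?thesis by simp
qed

lemma nn_integral_mult_eq_diagonal_tails:
  fixes M :: "(nat \<times> nat) pmf"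
  shows "(\<integral>\<^sup>+x. ennreal (case x of (a, b) \<Rightarrow> real a * real b) \<partial>M)
       = (\<Sum>m. \<Sum>k. emeasure M {(a, b). m < a \<and> m + k < b} + emeasure M {(a, b). m + k + 1 < a \<and> m < b})"
proof -
  have "(\<integral>\<^sup>+x. ennreal (case x of (a, b) \<Rightarrow> real a * real b) \<partial>M)
      = (\<integral>\<^sup>+x. (\<Sum>m. \<Sum>k. indicator {(a, b). m < a \<and> m + k < b} x
                           + indicator {(a, b). m + k + 1 < a \<and> m < b} x) \<partial>M)"
    by (intro nn_integral_cong)
      (auto simp: ennreal_mult_eq_diagonal_suminf indicator_def split: prod.splits)
  then show ?thesis by (simp add: nn_integral_suminf nn_integral_add)
qed

lemma wide_law_marginal_tails:
  assumes "wide_law M q0 q1 q2 q12"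
  shows "measure_pmf.prob M {x. i < fst x} = (q0 + q2) ^ i"
    and "measure_pmf.prob M {x. j < snd x} = (q0 + q1) ^ j"
proof -
  have surv: "surv M i j = (if j \<le> i then (q0 + q2) ^ (i - j) * q0 ^ j else (q0 + q1) ^ (j - i) * q0 ^ i)"
    for i j using assms unfolding wide_law_def by blast
  have "measure_pmf.prob M {(a, b). 0 < a \<and> 0 < b} = 1"
    using surv[of 0 0] by (simp add: surv_def)
  then have pos: "AE x in M. x \<in> {(a, b). 0 < a \<and> 0 < b}"
    by (rule measure_pmf.AE_prob_1)
  have "measure_pmf.prob M {x. i < fst x} = measure_pmf.prob M {(a, b). i < a \<and> 0 < b}"
    by (rule measure_pmf.finite_measure_eq_AE) (use pos in auto)
  then show "measure_pmf.prob M {x. i < fst x} = (q0 + q2) ^ i"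
    using surv[of i 0] by (simp add: surv_def)
  have "measure_pmf.prob M {x. j < snd x} = measure_pmf.prob M {(a, b). 0 < a \<and> j < b}"
    by (rule measure_pmf.finite_measure_eq_AE) (use pos in auto)
  then show "measure_pmf.prob M {x. j < snd x} = (q0 + q1) ^ j"
    using surv[of 0 j] by (cases j) (auto simp: surv_def)
qed

lemma
  assumes wide: "wide_law M q0 q1 q2 q12"
  shows wide_law_expectation_fst: "measure_pmf.expectation M (\<lambda>(a, b). real a) = 1 / (1 - (q0 + q2))"
    and wide_law_expectation_snd: "measure_pmf.expectation M (\<lambda>(a, b). real b) = 1 / (1 - (q0 + q1))"
    and wide_law_var1: "var1 M = (q0 + q2) / (1 - (q0 + q2))^2"
    and wide_law_var2: "var2 M = (q0 + q1) / (1 - (q0 + q1))^2"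
proof -
  have par: "0 \<le> q0 + q2" "q0 + q2 < 1" "0 \<le> q0 + q1" "q0 + q1 < 1"
    using wide unfolding wide_law_def by auto
  have fst: "(\<lambda>(a, b). real a) = (\<lambda>x::nat \<times> nat. real (fst x))"
    and snd: "(\<lambda>(a, b). real b) = (\<lambda>x::nat \<times> nat. real (snd x))"
    by auto
  show "measure_pmf.expectation M (\<lambda>(a, b). real a) = 1 / (1 - (q0 + q2))"
    "var1 M = (q0 + q2) / (1 - (q0 + q2))^2"
    unfolding var1_def fst using par wide_law_marginal_tails(1)[OF wide]
    by (auto intro: expectation_geometric_tail variance_geometric_tail)
  show "measure_pmf.expectation M (\<lambda>(a, b). real b) = 1 / (1 - (q0 + q1))"
    "var2 M = (q0 + q1) / (1 - (q0 + q1))^2"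
    unfolding var2_def snd using par wide_law_marginal_tails(2)[OF wide]
    by (auto intro: expectation_geometric_tail variance_geometric_tail)
qed

lemma wide_law_expectation_mult:
  assumes wide: "wide_law M q0 q1 q2 q12"
  shows "measure_pmf.expectation M (\<lambda>(a, b). real a * real b)
       = (1 / (1 - (q0 + q1)) + (q0 + q2) / (1 - (q0 + q2))) / (1 - q0)"
proof -
  define A where "A = q0 + q2"
  define B where "B = q0 + q1"
  define C where "C = 1 / (1 - B) + A / (1 - A)"
  have par: "0 \<le> q0" "q0 \<le> A" "A < 1" "q0 \<le> B" "B < 1"
    using wide unfolding wide_law_def A_def B_def by auto
  have surv: "surv M i j = (if j \<le> i then A ^ (i - j) * q0 ^ j else B ^ (j - i) * q0 ^ i)" for i j
    using wide unfolding wide_law_def A_def B_def by blast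
  have "emeasure M {(a, b). m < a \<and> m + k < b} + emeasure M {(a, b). m + k + 1 < a \<and> m < b}
      = ennreal (q0 ^ m * B ^ k + q0 ^ m * A * A ^ k)" for m k
  proof -
    have "surv M m (m + k) = q0 ^ m * B ^ k"
      using surv[of m "m + k"] by (cases k) auto
    moreover have "surv M (m + k + 1) m = q0 ^ m * A * A ^ k"
      using surv[of "m + k + 1" m] by simp
    ultimately show ?thesis
      using par by (simp add: measure_pmf.emeasure_eq_measure surv_def ennreal_plus)
  qed
  moreover have "(\<Sum>k. ennreal (q0 ^ m * B ^ k + q0 ^ m * A * A ^ k)) = ennreal (q0 ^ m * C)" for m
  proof (rule suminf_ennreal_eq)
    have "(\<lambda>k. q0 ^ m * B ^ k + q0 ^ m * A * A ^ k) sums (q0 ^ m * (1 / (1 - B)) + q0 ^ m * A * (1 / (1 - A)))"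
      using par by (intro sums_add sums_mult geometric_sums) auto
    then show "(\<lambda>k. q0 ^ m * B ^ k + q0 ^ m * A * A ^ k) sums (q0 ^ m * C)"
      by (simp add: C_def algebra_simps)
  qed (use par in auto)
  moreover have "(\<Sum>m. ennreal (q0 ^ m * C)) = ennreal (C / (1 - q0))"
  proof (rule suminf_ennreal_eq)
    have "(\<lambda>m. q0 ^ m * C) sums (1 / (1 - q0) * C)"
      using par by (intro sums_mult2 geometric_sums) auto
    then show "(\<lambda>m. q0 ^ m * C) sums (C / (1 - q0))" by simp
  qed (use par in \<open>auto simp: C_def\<close>)
  ultimately have "(\<integral>\<^sup>+x. ennreal (case x of (a, b) \<Rightarrow> real a * real b) \<partial>M) = ennreal (C / (1 - q0))"
    by (simp add: nn_integral_mult_eq_diagonal_tails)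
  then have "measure_pmf.expectation M (\<lambda>(a, b). real a * real b) = C / (1 - q0)"
    using par by (subst (asm) nn_integral_eq_integrable) (auto simp: C_def split: prod.splits)
  then show ?thesis unfolding A_def B_def C_def .
qed

lemma wide_law_cov:
  assumes wide: "wide_law M q0 q1 q2 q12"
  shows "cov M = (q0 - (q0 + q2) * (q0 + q1)) / ((1 - q0) * (1 - (q0 + q2)) * (1 - (q0 + q1)))"
proof -
  have "q0 + q2 < 1" "q0 + q1 < 1" "q0 < 1" "0 \<le> q1"
    using wide unfolding wide_law_def by auto
  then show ?thesis
    unfolding cov_def wide_law_expectation_mult[OF wide] wide_law_expectation_fst[OF wide]
      wide_law_expectation_snd[OF wide]
    by (simp add: divide_simps) (simp add: algebra_simps)
qed

lemma wide_law_corr_nonneg_iff: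
  assumes wide: "wide_law M q0 q1 q2 q12" and "0 < q0 + q2" "0 < q0 + q1"
  shows "0 \<le> corr M \<longleftrightarrow> (q0 + q2) * (q0 + q1) \<le> q0"
proof -
  have lt: "q0 + q2 < 1" "q0 + q1 < 1" "q0 < 1"
    using wide unfolding wide_law_def by auto
  then have "0 < sqrt (var1 M * var2 M)"
    using assms by (simp add: wide_law_var1 wide_law_var2)
  then have "0 \<le> corr M \<longleftrightarrow> 0 \<le> cov M"
    unfolding corr_def by (simp add: zero_le_divide_iff)
  also have "\<dots> \<longleftrightarrow> (q0 + q2) * (q0 + q1) \<le> q0"
  proof -
    have "0 < (1 - q0) * (1 - (q0 + q2)) * (1 - (q0 + q1))"
      using lt by simp
    then show ?thesis
      unfolding wide_law_cov[OF wide] by (simp add: zero_le_divide_iff)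
  qed
  finally show ?thesis .
qed

lemma narrow_survival_eq_wide_survival:
  fixes A B q :: "'a :: field"
  assumes "A \<noteq> 0" "B \<noteq> 0" "q \<noteq> 0"
  shows "(q / B) ^ i * (q / A) ^ j * (B * A / q) ^ max i j
       = (if j \<le> i then A ^ (i - j) * q ^ j else B ^ (j - i) * q ^ i)"
proof (cases "j \<le> i")
  case True
  then obtain k where i: "i = j + k" using le_Suc_ex by blast
  have "(q / B) ^ i * (q / A) ^ j * (B * A / q) ^ max i j = (q / B * (B * A / q)) ^ (j + k) * (q / A) ^ j"
    using i by (simp only: max_add_distrib_left max.idem max_0R power_mult_distrib ac_simps) simp
  also have "q / B * (B * A / q) = A"
    using assms by simp
  also have "A ^ (j + k) * (q / A) ^ j = A ^ k * (A * (q / A)) ^ j"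
    by (simp only: power_add power_mult_distrib ac_simps)
  also have "A * (q / A) = q"
    using assms by simp
  finally show ?thesis using True i assms by simp
next
  case False
  then obtain k where j: "j = i + k" using le_Suc_ex nat_le_linear by metis
  have "(q / B) ^ i * (q / A) ^ j * (B * A / q) ^ max i j = (q / A * (B * A / q)) ^ (i + k) * (q / B) ^ i"
    using j by (simp only: power_mult_distrib ac_simps) simp
  also have "q / A * (B * A / q) = B"
    using assms by simp
  also have "B ^ (i + k) * (q / B) ^ i = B ^ k * (B * (q / B)) ^ i"
    by (simp only: power_add power_mult_distrib ac_simps)
  also have "B * (q / B) = q"
    using assms by simp
  finally show ?thesis using False j assms by simp
qed

lemma wide_law_narrow_law:
  assumes wide: "wide_law M q0 q1 q2 q12" and "0 < q0" and le: "(q0 + q2) * (q0 + q1) \<le> q0"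
  shows "narrow_law M (q0 / (q0 + q1)) (q0 / (q0 + q2)) ((q0 + q1) * (q0 + q2) / q0)"
proof -
  define A where "A = q0 + q2"
  define B where "B = q0 + q1"
  have par: "q0 \<le> A" "q0 \<le> B" "A < 1" "B < 1"
    using wide unfolding wide_law_def A_def B_def by auto
  have "surv M i j = (if j \<le> i then A ^ (i - j) * q0 ^ j else B ^ (j - i) * q0 ^ i)" for i j
    using wide unfolding wide_law_def A_def B_def by blast
  then have "surv M i j = (q0 / B) ^ i * (q0 / A) ^ j * (B * A / q0) ^ max i j" for i j
    using \<open>0 < q0\<close> par by (simp add: narrow_survival_eq_wide_survival)
  moreover have "q0 / B * (B * A / q0) = A" "q0 / A * (B * A / q0) = B"
    using \<open>0 < q0\<close> par by auto
  moreover have "B * A / q0 \<le> 1"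
    using le \<open>0 < q0\<close> by (simp add: A_def B_def mult.commute)
  ultimately show ?thesis
    using \<open>0 < q0\<close> par unfolding narrow_law_def A_def B_def by simp
qed

lemma wide_law_narrow_imp_le:
  assumes wide: "wide_law M q0 q1 q2 q12" and "narrow_law M p1 p2 p12"
  shows "(q0 + q2) * (q0 + q1) \<le> q0"
proof -
  have N: "surv M i j = p1 ^ i * p2 ^ j * p12 ^ max i j" for i j
    using assms unfolding narrow_law_def by blast
  have "0 \<le> p12" "p12 \<le> 1" "0 \<le> q0"
    using assms unfolding narrow_law_def wide_law_def by auto
  have W: "surv M i j = (if j \<le> i then (q0 + q2) ^ (i - j) * q0 ^ j else (q0 + q1) ^ (j - i) * q0 ^ i)"
    for i j using wide unfolding wide_law_def by blast
  have "q0 + q2 = p1 * p12" "q0 + q1 = p2 * p12"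
    using N[of 1 0] W[of 1 0] N[of 0 1] W[of 0 1] by simp_all
  then have "(q0 + q2) * (q0 + q1) = (p1 * p2 * p12) * p12"
    by (simp add: algebra_simps)
  also have "p1 * p2 * p12 = q0"
    using N[of 1 1] W[of 1 1] by simp
  finally show ?thesis
    using \<open>0 \<le> p12\<close> \<open>p12 \<le> 1\<close> \<open>0 \<le> q0\<close> by (simp add: mult_left_le)
qed

lemma wide_law_is_narrow_iff:
  assumes wide: "wide_law M q0 q1 q2 q12" and "0 < q0 + q2" "0 < q0 + q1"
  shows "is_narrow M \<longleftrightarrow> (q0 + q2) * (q0 + q1) \<le> q0"
proof
  assume "is_narrow M"
  then show "(q0 + q2) * (q0 + q1) \<le> q0"
    using wide_law_narrow_imp_le[OF wide] unfolding is_narrow_def by blast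
next
  assume le: "(q0 + q2) * (q0 + q1) \<le> q0"
  moreover have "0 < (q0 + q2) * (q0 + q1)"
    using assms(2,3) by simp
  ultimately show "is_narrow M"
    using wide_law_narrow_law[OF wide _ le] unfolding is_narrow_def by force
qed

theorem mainTheorem9:
  fixes M :: "(nat \<times> nat) pmf" and q0 q1 q2 q12 :: real
  assumes wide: "wide_law M q0 q1 q2 q12"
    and pos1: "measure_pmf.prob M {(a, b). a > 1} > 0"
    and pos2: "measure_pmf.prob M {(a, b). b > 1} > 0"
  shows "(is_narrow M \<longleftrightarrow> corr M \<ge> 0) \<and>
         (corr M \<ge> 0 \<and> q0 > 0 \<longrightarrow>
            narrow_law M (q0 / (q0 + q1)) (q0 / (q0 + q2)) ((q0 + q1) * (q0 + q2) / q0))"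
proof -
  have "{(a, b). a > 1} = {x :: nat \<times> nat. 1 < fst x}" "{(a, b). b > 1} = {x :: nat \<times> nat. 1 < snd x}"
    by auto
  then have "0 < q0 + q2" "0 < q0 + q1"
    using pos1 pos2 wide_law_marginal_tails(1)[OF wide, of 1] wide_law_marginal_tails(2)[OF wide, of 1] by simp_all
  then show ?thesis
    using wide_law_is_narrow_iff[OF wide] wide_law_corr_nonneg_iff[OF wide]
      wide_law_narrow_law[OF wide] by blast
qed

end
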